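(* Let $S$ be a finite set of points in $\mathbb{R}^d$ with Euclidean distance, $f\ge0$ an integer, $0<\theta<\pi/4$, $\mathcal{C}$ a cone collection as in the context, and $\Theta=\Theta(\theta,2f+1)$. Let $F$ be a set of edges of $\Theta$ such that $(S,F)$ has maximum degree at most $f$. Then for every edge $\{p,q\}$ of $K_S\setminus F$, $\delta_{\Theta\setminus F}(p,q)\le t\,|pq|$, where $t=1/(\cos\theta-\sin\theta)$.
   Context: $K_S$ is the complete graph on $S$ with edge weights the Euclidean distances; all graphs have Euclidean edge weights; $\delta_X$ is shortest-path distance in $X$; $X\setminus F$ is $X$ with the edges of $F$ removed. $\mathcal{C}$ is a finite collection of cones with apex at the origin covering $\mathbb{R}^d$, each of angular diameter at most $\theta$, i.e. $\max\{\angle(0x,0y):x,y\in C\setminus\{0\}\}\le\theta$. For each $C\in\mathcal{C}$ fix a ray $\ell_C$ from the origin contained in $C$. For $p\in S$: $C+p=\{x+p:x\in C\}$, $\ell_C+p$ is the translate of $\ell_C$ emanating from $p$, and $S_{p,C}=(C+p)\cap(S\setminus\{p\})$. The graph $\Theta(\theta,k)$ has vertex set $S$, and for each $p\in S$ and $C\in\mathcal{C}$ it contains an edge from $p$ to each of $\min(k,|S_{p,C}|)$ points of $S_{p,C}$ whose orthogonal projections onto $\ell_C+p$ are closest to $p$ (ties broken arbitrarily). *)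

theory Defs
  imports "HOL-Analysis.Analysis"
begin

definition vec_angle :: "'a::euclidean_space \<Rightarrow> 'a \<Rightarrow> real" where
  "vec_angle x y = arccos ((x \<bullet> y) / (norm x * norm y))"

definition angular_diam_le :: "'a::euclidean_space set \<Rightarrow> real \<Rightarrow> bool" where
  "angular_diam_le C \<theta> \<longleftrightarrow> (\<forall>x\<in>C - {0}. \<forall>y\<in>C - {0}. vec_angle x y \<le> \<theta>)"

definition cone_collection ::
  "'a::euclidean_space set set \<Rightarrow> real \<Rightarrow> ('a set \<Rightarrow> 'a) \<Rightarrow> bool" where
  "cone_collection Cs \<theta> u \<longleftrightarrow>
     finite Cs \<and> \<Union>Cs = UNIV \<and>
     (\<forall>C\<in>Cs. cone C \<and> angular_diam_le C \<theta> \<and> u C \<noteq> 0 \<and> (\<forall>s\<ge>0. s *\<^sub>R u C \<in> C))"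

definition cone_pts :: "'a::euclidean_space set \<Rightarrow> 'a \<Rightarrow> 'a set \<Rightarrow> 'a set" where
  "cone_pts S p C = ((\<lambda>x. x + p) ` C) \<inter> (S - {p})"

(* distance from p of the orthogonal projection of x onto the ray l_C + p,
   the ray being {p + s *R v | s >= 0} *)
definition proj_dist :: "'a::euclidean_space \<Rightarrow> 'a \<Rightarrow> 'a \<Rightarrow> real" where
  "proj_dist v p x = max 0 (((x - p) \<bullet> v) / norm v)"

(* N p C is the set of neighbours chosen by p in cone C for the graph Theta(theta,k),
   ties broken arbitrarily (any valid choice). *)
definition theta_selection ::
  "'a::euclidean_space set \<Rightarrow> 'a set set \<Rightarrow> ('a set \<Rightarrow> 'a) \<Rightarrow> nat \<Rightarrow> ('a \<Rightarrow> 'a set \<Rightarrow> 'a set) \<Rightarrow> bool" where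
  "theta_selection S Cs u k N \<longleftrightarrow>
     (\<forall>p\<in>S. \<forall>C\<in>Cs.
        N p C \<subseteq> cone_pts S p C \<and>
        card (N p C) = min k (card (cone_pts S p C)) \<and>
        (\<forall>x\<in>N p C. \<forall>y\<in>cone_pts S p C - N p C. proj_dist (u C) p x \<le> proj_dist (u C) p y))"

definition theta_edges :: "'a set \<Rightarrow> 'a set set \<Rightarrow> ('a \<Rightarrow> 'a set \<Rightarrow> 'a set) \<Rightarrow> 'a set set" where
  "theta_edges S Cs N = {{p, q} | p q. p \<in> S \<and> (\<exists>C\<in>Cs. q \<in> N p C)}"

definition edge_degree :: "'a set set \<Rightarrow> 'a \<Rightarrow> nat" where
  "edge_degree F v = card {e \<in> F. v \<in> e}"

definition is_walk :: "'a set set \<Rightarrow> 'a \<Rightarrow> 'a \<Rightarrow> 'a list \<Rightarrow> bool" where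
  "is_walk E p q xs \<longleftrightarrow> xs \<noteq> [] \<and> hd xs = p \<and> last xs = q \<and>
     (\<forall>i < length xs - 1. {xs ! i, xs ! Suc i} \<in> E)"

definition walk_len :: "'a::metric_space list \<Rightarrow> real" where
  "walk_len xs = (\<Sum>i < length xs - 1. dist (xs ! i) (xs ! Suc i))"

(* delta_E(p,q); equals \<infinity> if q is not reachable from p *)
definition graph_dist :: "'a::metric_space set set \<Rightarrow> 'a \<Rightarrow> 'a \<Rightarrow> ereal" where
  "graph_dist E p q = (INF xs \<in> {xs. is_walk E p q xs}. ereal (walk_len xs))"

end

theory Submission
  imports Defs
begin

text \<open>
  Greedy routing: to reach \<open>y\<close> from \<open>x\<close>, take the cone \<open>C\<close> of \<open>x\<close> containing \<open>y\<close>. If \<open>y\<close> is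
  not among the \<open>2f + 1\<close> points selected by \<open>x\<close> in \<open>C\<close>, then at most \<open>f\<close> of them are cut off
  from \<open>x\<close> and at most \<open>f\<close> from \<open>y\<close> by faulty edges, so some selected \<open>r\<close> is joined to \<open>x\<close>
  and not faultily joined to \<open>y\<close>. Since \<open>r\<close> is at most as far along the ray of \<open>C\<close> as \<open>y\<close>
  and both lie in a cone of angle \<open>\<theta>\<close>, \<open>|ry| \<le> |xy| - (cos \<theta> - sin \<theta>) |xr|\<close>; in particular
  \<open>|ry| < |xy|\<close>, so induction on the distance gives a walk of length at most
  \<open>|xr| + t |ry| \<le> t |xy|\<close> with \<open>t = 1 / (cos \<theta> - sin \<theta>)\<close>.
\<close>

lemma sin_less_cos:
  assumes "0 < \<theta>" "\<theta> < pi / 4"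
  shows "sin \<theta> < cos \<theta>"
proof -
  have "cos (pi/2 - \<theta>) < cos \<theta>"
    by (rule cos_monotone_0_pi) (use assms in auto)
  then show ?thesis by (simp add: cos_diff)
qed

lemma inner_ge_if_vec_angle_le:
  fixes x y :: "'a::euclidean_space"
  assumes "x \<noteq> 0" "y \<noteq> 0" "vec_angle x y \<le> \<theta>" "0 \<le> \<theta>" "\<theta> \<le> pi"
  shows "norm x * norm y * cos \<theta> \<le> x \<bullet> y"
proof -
  define r where "r = (x \<bullet> y) / (norm x * norm y)"
  have pos: "norm x * norm y > 0" using assms by simp
  have "\<bar>x \<bullet> y\<bar> \<le> norm x * norm y" by (rule Cauchy_Schwarz_ineq2)
  then have r: "-1 \<le> r" "r \<le> 1" unfolding r_def using pos
    by (auto simp: divide_simps abs_le_iff)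
  have "arccos r \<le> \<theta>" using assms(3) unfolding vec_angle_def r_def .
  then have "cos \<theta> \<le> cos (arccos r)"
    using arccos_bounded[OF r] assms by (intro cos_monotone_0_pi_le) auto
  then have "cos \<theta> \<le> r" using cos_arccos[OF r] by simp
  then show ?thesis unfolding r_def using pos by (simp add: divide_simps mult.commute)
qed

text \<open>
  Squaring, the claim reduces to \<open>a \<bullet> b \<ge> |a| |b| cos \<theta>\<close> together with \<open>|a| cos \<theta> \<le> |b|\<close>,
  which follows from comparing projections onto \<open>u\<close>.
\<close>
lemma norm_diff_le_in_narrow_cone:
  fixes a b u :: "'a::euclidean_space"
  assumes "u \<noteq> 0" "0 \<le> \<theta>" "\<theta> \<le> pi"
    and ab: "norm a * norm b * cos \<theta> \<le> a \<bullet> b"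
    and au: "norm a * norm u * cos \<theta> \<le> a \<bullet> u"
    and aub: "a \<bullet> u \<le> b \<bullet> u"
  shows "norm (b - a) \<le> norm b - (cos \<theta> - sin \<theta>) * norm a"
proof -
  define X where "X = norm a"
  define Y where "Y = norm b"
  define cs where "cs = cos \<theta>"
  define sn where "sn = sin \<theta>"
  have X: "X \<ge> 0" unfolding X_def by simp
  have sn: "sn \<ge> 0" unfolding sn_def using assms by (simp add: sin_ge_zero)
  have "norm a * norm u * cos \<theta> \<le> norm b * norm u"
    using au aub norm_cauchy_schwarz[of b u] by linarith
  then have XY: "X * cs \<le> Y" using \<open>u \<noteq> 0\<close> unfolding X_def Y_def cs_def by simp
  have nonneg: "0 \<le> Y - (cs - sn) * X"
    using XY mult_nonneg_nonneg[OF sn X] by (simp add: algebra_simps)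
  have "X * cs * (X * sn) \<le> Y * (X * sn)" using XY X sn by (intro mult_right_mono) auto
  then have key: "X^2 * sn * cs \<le> X * Y * sn" by (simp add: power2_eq_square algebra_simps)
  have "(norm (b - a))^2 = Y^2 - 2 * (a \<bullet> b) + X^2"
    unfolding X_def Y_def
    by (simp add: power2_norm_eq_inner inner_diff algebra_simps inner_commute)
  also have "\<dots> \<le> Y^2 - 2*X*Y*cs + 2 * X * Y * sn + X^2 * (cs^2 + sn^2) - 2 * X^2 * sn * cs"
  proof -
    have "X * Y * cs \<le> a \<bullet> b" using ab unfolding X_def Y_def cs_def .
    moreover have "X^2 * (cs^2 + sn^2) = X^2" unfolding cs_def sn_def by simp
    ultimately show ?thesis using key by linarith
  qed
  also have "\<dots> = (Y - (cs - sn) * X)^2" by (simp add: power2_eq_square algebra_simps)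
  finally have "norm (b - a) \<le> Y - (cs - sn) * X"
    using nonneg by (rule power2_le_imp_le)
  then show ?thesis unfolding X_def Y_def cs_def sn_def .
qed

lemma inner_le_if_proj_dist_le:
  assumes "proj_dist v p r \<le> proj_dist v p y" "0 \<le> (y - p) \<bullet> v" "v \<noteq> 0"
  shows "(r - p) \<bullet> v \<le> (y - p) \<bullet> v"
  using assms unfolding proj_dist_def by (auto simp: divide_le_cancel)

lemma exists_common_non_neighbour:
  assumes "finite F" "2 * f < card A" "x \<notin> A" "y \<notin> A"
    and "edge_degree F x \<le> f" "edge_degree F y \<le> f"
  shows "\<exists>r\<in>A. {x, r} \<notin> F \<and> {r, y} \<notin> F"
proof (rule ccontr)
  define Bx where "Bx = {r \<in> A. {x, r} \<in> F}"
  define By where "By = {r \<in> A. {r, y} \<in> F}"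
  assume "\<not> ?thesis"
  then have "A = Bx \<union> By" unfolding Bx_def By_def by blast
  then have "card A \<le> card Bx + card By" using card_Un_le[of Bx By] by simp
  moreover have "card Bx \<le> edge_degree F x" unfolding edge_degree_def Bx_def
    by (rule card_inj_on_le[where f = "\<lambda>r. {x, r}"])
      (use \<open>x \<notin> A\<close> \<open>finite F\<close> in \<open>auto simp: inj_on_def doubleton_eq_iff\<close>)
  moreover have "card By \<le> edge_degree F y" unfolding edge_degree_def By_def
    by (rule card_inj_on_le[where f = "\<lambda>r. {r, y}"])
      (use \<open>y \<notin> A\<close> \<open>finite F\<close> in \<open>auto simp: inj_on_def doubleton_eq_iff\<close>)
  ultimately show False using assms(2,5,6) by linarith
qed

lemma is_walk_singleton: "is_walk E y y [y]" and walk_len_singleton: "walk_len [y] = 0"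
  unfolding is_walk_def walk_len_def by simp_all

lemma is_walk_Cons:
  assumes "is_walk E r q ys" "{x, r} \<in> E"
  shows "is_walk E x q (x # ys)" and "walk_len (x # ys) = dist x r + walk_len ys"
proof -
  obtain zs where ys: "ys = r # zs" using assms(1) unfolding is_walk_def
    by (cases ys) auto
  show "is_walk E x q (x # ys)"
    using assms unfolding is_walk_def ys by (auto simp: less_Suc_eq_0_disj)
  show "walk_len (x # ys) = dist x r + walk_len ys"
    unfolding walk_len_def ys by (simp add: sum.lessThan_Suc_shift del: sum.lessThan_Suc)
qed

lemma graph_dist_le_walk_len:
  "is_walk E p q xs \<Longrightarrow> graph_dist E p q \<le> ereal (walk_len xs)"
  unfolding graph_dist_def by (rule INF_lower) simp

lemma finite_measure_less_induct:
  fixes g :: "'a \<Rightarrow> 'b::linorder"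
  assumes "finite A" "x \<in> A"
    and step: "\<And>x. x \<in> A \<Longrightarrow> (\<And>y. y \<in> A \<Longrightarrow> g y < g x \<Longrightarrow> P y) \<Longrightarrow> P x"
  shows "P x"
proof -
  have "\<And>x. x \<in> A \<Longrightarrow> card {y \<in> A. g y < g x} = n \<Longrightarrow> P x" for n
  proof (induction n rule: less_induct)
    case (less n x)
    show ?case
    proof (rule step[OF less.prems(1)])
      fix y assume "y \<in> A" "g y < g x"
      then have "{z \<in> A. g z < g y} \<subset> {z \<in> A. g z < g x}" by auto
      then have "card {z \<in> A. g z < g y} < n"
        using less.prems(2) \<open>finite A\<close> by (auto intro: psubset_card_mono)
      then show "P y" using less.IH \<open>y \<in> A\<close> by blast
    qed
  qed
  then show ?thesis using \<open>x \<in> A\<close> by blast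
qed

locale fault_tolerant_theta =
  fixes S :: "'a::euclidean_space set" and Cs :: "'a set set" and u :: "'a set \<Rightarrow> 'a"
    and N :: "'a \<Rightarrow> 'a set \<Rightarrow> 'a set" and f :: nat and \<theta> :: real and F :: "'a set set"
  assumes finite_points: "finite S"
    and angle_pos: "0 < \<theta>" and angle_less: "\<theta> < pi / 4"
    and cones: "cone_collection Cs \<theta> u"
    and selection: "theta_selection S Cs u (2 * f + 1) N"
    and faults_subset: "F \<subseteq> theta_edges S Cs N"
    and fault_degree: "\<forall>v\<in>S. edge_degree F v \<le> f"
begin

abbreviation surviving_edges :: "'a set set" where
  "surviving_edges \<equiv> theta_edges S Cs N - F"

lemma selected_subset: "x \<in> S \<Longrightarrow> C \<in> Cs \<Longrightarrow> N x C \<subseteq> cone_pts S x C"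
  using selection unfolding theta_selection_def by blast

lemma finite_faults: "finite F"
proof -
  have "theta_edges S Cs N \<subseteq> Pow S"
    using selected_subset unfolding theta_edges_def cone_pts_def by blast
  then show ?thesis
    using faults_subset finite_points by (meson finite_Pow_iff finite_subset)
qed

lemma ray_in_cone: "C \<in> Cs \<Longrightarrow> u C \<in> C \<and> u C \<noteq> 0"
  using cones unfolding cone_collection_def by (metis scaleR_one zero_le_one)

lemma inner_ge_in_cone:
  assumes "C \<in> Cs" "a \<in> C" "b \<in> C" "a \<noteq> 0" "b \<noteq> 0"
  shows "norm a * norm b * cos \<theta> \<le> a \<bullet> b"
  using assms cones angle_pos angle_less
  by (intro inner_ge_if_vec_angle_le) (auto simp: cone_collection_def angular_diam_le_def)

lemma cos_minus_sin_pos: "0 < cos \<theta> - sin \<theta>"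
  using sin_less_cos[OF angle_pos angle_less] by simp

lemma dist_selected_le:
  assumes "x \<in> S" "C \<in> Cs" "y \<in> cone_pts S x C" "y \<notin> N x C" "r \<in> N x C"
  shows "dist r y \<le> dist x y - (cos \<theta> - sin \<theta>) * dist x r"
proof -
  define a where "a = r - x"
  define b where "b = y - x"
  have r: "r \<in> cone_pts S x C" using selected_subset assms by blast
  have a: "a \<in> C" "a \<noteq> 0" and b: "b \<in> C" "b \<noteq> 0"
    using r assms(3) unfolding a_def b_def cone_pts_def by auto
  have uC: "u C \<in> C" "u C \<noteq> 0" using ray_in_cone[OF \<open>C \<in> Cs\<close>] by auto
  have "0 < cos \<theta>" using cos_minus_sin_pos sin_gt_zero angle_pos angle_less by fastforce
  then have "0 \<le> norm b * norm (u C) * cos \<theta>" by simp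
  then have "0 \<le> b \<bullet> u C" using inner_ge_in_cone[OF \<open>C \<in> Cs\<close> b(1) uC(1) b(2) uC(2)] by linarith
  moreover have "proj_dist (u C) x r \<le> proj_dist (u C) x y"
    using selection assms unfolding theta_selection_def by blast
  ultimately have "a \<bullet> u C \<le> b \<bullet> u C"
    using inner_le_if_proj_dist_le uC(2) unfolding a_def b_def by blast
  then have "norm (b - a) \<le> norm b - (cos \<theta> - sin \<theta>) * norm a"
    using angle_pos angle_less uC
    by (intro norm_diff_le_in_narrow_cone inner_ge_in_cone[OF \<open>C \<in> Cs\<close>] a b) auto
  then show ?thesis unfolding a_def b_def by (simp add: dist_norm norm_minus_commute)
qed

lemma exists_fault_free_selected:
  assumes "x \<in> S" "y \<in> S" "C \<in> Cs" "y \<in> cone_pts S x C" "y \<notin> N x C"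
  shows "\<exists>r\<in>N x C. {x, r} \<notin> F \<and> {r, y} \<notin> F"
proof (rule exists_common_non_neighbour[OF finite_faults])
  have fin: "finite (cone_pts S x C)" using finite_points unfolding cone_pts_def by simp
  have "card (N x C) < card (cone_pts S x C)"
    using selected_subset assms by (intro psubset_card_mono fin) blast
  moreover have "card (N x C) = min (2 * f + 1) (card (cone_pts S x C))"
    using selection assms unfolding theta_selection_def by blast
  ultimately show "2 * f < card (N x C)" by linarith
  show "x \<notin> N x C" using selected_subset assms unfolding cone_pts_def by blast
qed (use assms fault_degree in auto)

lemma greedy_step:
  assumes "x \<in> S" "y \<in> S" "x \<noteq> y" "{x, y} \<notin> F"
  shows "{x, y} \<in> surviving_edges \<or>
    (\<exists>r\<in>S. r \<noteq> x \<and> r \<noteq> y \<and> {x, r} \<in> surviving_edges \<and> {r, y} \<notin> F \<and>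
      dist r y \<le> dist x y - (cos \<theta> - sin \<theta>) * dist x r)"
proof -
  obtain C where C: "C \<in> Cs" "y - x \<in> C" using cones unfolding cone_collection_def by blast
  have y: "y \<in> cone_pts S x C"
    using C assms unfolding cone_pts_def by (auto intro!: image_eqI[where x = "y - x"])
  show ?thesis
  proof (cases "y \<in> N x C")
    case True
    then show ?thesis using C assms unfolding theta_edges_def by blast
  next
    case False
    then obtain r where r: "r \<in> N x C" "{x, r} \<notin> F" "{r, y} \<notin> F"
      using exists_fault_free_selected C assms y by blast
    have "r \<in> S" "r \<noteq> x" using r selected_subset C assms unfolding cone_pts_def by blast+
    moreover have "r \<noteq> y" using r False by blast
    moreover have "{x, r} \<in> surviving_edges" using r C assms unfolding theta_edges_def by blast
    moreover have "dist r y \<le> dist x y - (cos \<theta> - sin \<theta>) * dist x r"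
      using dist_selected_le C assms y False r by blast
    ultimately show ?thesis using r by blast
  qed
qed

lemma fault_free_walk:
  assumes "x \<in> S" "y \<in> S" "x \<noteq> y" "{x, y} \<notin> F"
  shows "\<exists>xs. is_walk surviving_edges x y xs \<and> walk_len xs \<le> 1 / (cos \<theta> - sin \<theta>) * dist x y"
proof -
  define c where "c = cos \<theta> - sin \<theta>"
  define P where "P = (\<lambda>(x, y). x \<noteq> y \<longrightarrow> {x, y} \<notin> F \<longrightarrow>
    (\<exists>xs. is_walk surviving_edges x y xs \<and> walk_len xs \<le> 1 / c * dist x y))"
  have c: "0 < c" "c \<le> 1"
  proof -
    have "0 < sin \<theta>" using angle_pos angle_less by (intro sin_gt_zero) auto
    then show "0 < c" "c \<le> 1"
      using cos_minus_sin_pos cos_le_one[of \<theta>] unfolding c_def by linarith+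
  qed
  have "P (x, y)"
  proof (rule finite_measure_less_induct[where g = "\<lambda>(x, y). dist x y"])
    show "finite (S \<times> S)" "(x, y) \<in> S \<times> S" using finite_points assms by auto
  next
    fix z assume "z \<in> S \<times> S" and IH: "\<And>w. w \<in> S \<times> S \<Longrightarrow>
      (\<lambda>(x, y). dist x y) w < (\<lambda>(x, y). dist x y) z \<Longrightarrow> P w"
    then obtain x y where z: "z = (x, y)" "x \<in> S" "y \<in> S" by blast
    show "P z" unfolding z P_def prod.case
    proof (intro impI)
      assume "x \<noteq> y" "{x, y} \<notin> F"
      from greedy_step[OF z(2,3) this]
      show "\<exists>xs. is_walk surviving_edges x y xs \<and> walk_len xs \<le> 1 / c * dist x y"
      proof (elim disjE bexE conjE)
        assume "{x, y} \<in> surviving_edges"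
        from is_walk_Cons[OF is_walk_singleton this]
        have "is_walk surviving_edges x y [x, y]" "walk_len [x, y] = dist x y"
          by (simp_all add: walk_len_singleton)
        moreover have "dist x y \<le> 1 / c * dist x y" using c by (simp add: le_divide_eq mult_left_le)
        ultimately show ?thesis by (intro exI[of _ "[x, y]"]) simp
      next
        fix r assume "r \<in> S" "r \<noteq> x" "r \<noteq> y" and xr: "{x, r} \<in> surviving_edges"
          and "{r, y} \<notin> F" and "dist r y \<le> dist x y - (cos \<theta> - sin \<theta>) * dist x r"
        then have closer: "dist r y \<le> dist x y - c * dist x r" by (simp only: c_def)
        moreover have "0 < c * dist x r" using c \<open>r \<noteq> x\<close> by simp
        ultimately have "dist r y < dist x y" by linarith
        then obtain ys where ys: "is_walk surviving_edges r y ys" "walk_len ys \<le> 1 / c * dist r y"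
          using IH[of "(r, y)"] \<open>r \<in> S\<close> z \<open>r \<noteq> y\<close> \<open>{r, y} \<notin> F\<close> unfolding P_def by auto
        note walk = is_walk_Cons[OF ys(1) xr]
        have "walk_len (x # ys) \<le> dist x r + 1 / c * (dist x y - c * dist x r)"
          using walk(2) ys(2) mult_left_mono[OF closer, of "1 / c"] c by simp
        also have "\<dots> = 1 / c * dist x y" using c by (simp add: field_simps)
        finally show ?thesis using walk(1) by blast
      qed
    qed
  qed
  then show ?thesis using assms unfolding P_def c_def prod.case by blast
qed
end

theorem lemma11:
  fixes S :: "'a::euclidean_space set"
    and Cs :: "'a set set" and u :: "'a set \<Rightarrow> 'a"
    and N :: "'a \<Rightarrow> 'a set \<Rightarrow> 'a set"
    and f :: nat and \<theta> :: real and F :: "'a set set"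
  assumes "finite S"
    and "0 < \<theta>" and "\<theta> < pi / 4"
    and "cone_collection Cs \<theta> u"
    and "theta_selection S Cs u (2 * f + 1) N"
    and "F \<subseteq> theta_edges S Cs N"
    and "\<forall>v\<in>S. edge_degree F v \<le> f"
    and "p \<in> S" and "q \<in> S" and "p \<noteq> q" and "{p, q} \<notin> F"
  shows "graph_dist (theta_edges S Cs N - F) p q
           \<le> ereal (1 / (cos \<theta> - sin \<theta>) * dist p q)"
proof -
  interpret fault_tolerant_theta S Cs u N f \<theta> F
    using assms(1-7) by unfold_locales
  obtain xs where walk: "is_walk (theta_edges S Cs N - F) p q xs"
    and len: "walk_len xs \<le> 1 / (cos \<theta> - sin \<theta>) * dist p q"
    using fault_free_walk assms(8-11) by blast
  have "graph_dist (theta_edges S Cs N - F) p q \<le> ereal (walk_len xs)"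
    using walk by (rule graph_dist_le_walk_len)
  also have "\<dots> \<le> ereal (1 / (cos \<theta> - sin \<theta>) * dist p q)"
    using len by simp
  finally show ?thesis .
qed

end
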